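(* Let $\theta\in\mathbb{R}$, let $U\subset\mathbb{R}^4$ be a connected open set, identified with an open subset of $\mathbb{C}^2$ via $z_1=x^2+ix^1$, $z_2=x^4+ix^3$, and let $\omega^\pm:U\to M_4(\mathbb{R})$ be smooth with $\omega^\pm(x)$ antisymmetric and $\star\omega^\pm(x)=\pm\omega^\pm(x)$ for all $x\in U$. Assume $\det[E_4-\omega^\pm\theta^\mp]\neq0$ on $U$ and that for each $x$ the matrix $g^\pm(x):=2\left(E_4-\omega^\pm(x)\theta^\mp\right)^{-1}-E_4$ lies in the image of $\iota_{sym}$. Put $h^\pm:=\iota_{sym}^{-1}[g^\pm]$. Then $h^\pm$ is a smooth map to Hermitian $2\times 2$ matrices which is either positive definite at every point of $U$ or negative definite at every point of $U$, $\det[h^\pm]=1$ on $U$, and hence its Ricci curvature $R_{\bar jk}=\partial_{\bar z_j}\partial_{z_k}\log\det[h^\pm]$ vanishes identically on $U$ (i.e. $h^\pm$ is a local Ricci-flat Hermitian metric).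
   Context: $E_4$ is the $4\times4$ identity matrix. For a real antisymmetric $4\times 4$ matrix $\omega=(\omega_{kl})$, $(\star\omega)_{kl}=\frac12\sum_{m,n=1}^4\varepsilon_{klmn}\omega_{mn}$ ($\varepsilon$ the Levi-Civita symbol). For $\theta\in\mathbb{R}$, $\theta^{\pm}$ denotes the $4\times4$ matrix whose only nonzero entries are $(\theta^\pm)_{12}=-\theta$, $(\theta^\pm)_{21}=\theta$, $(\theta^\pm)_{34}=\mp\theta$, $(\theta^\pm)_{43}=\pm\theta$. For a Hermitian $2\times2$ matrix $h=(h_{k\bar l})$, $\iota_{sym}(h)$ is the real symmetric $4\times4$ matrix $$\begin{pmatrix} h_{1\bar1}&0&\frac12(h_{1\bar2}+h_{2\bar1})&\frac1{2i}(h_{2\bar1}-h_{1\bar2})\\ 0&h_{1\bar1}&-\frac1{2i}(h_{2\bar1}-h_{1\bar2})&\frac12(h_{1\bar2}+h_{2\bar1})\\ \frac12(h_{1\bar2}+h_{2\bar1})&-\frac1{2i}(h_{2\bar1}-h_{1\bar2})&h_{2\bar2}&0\\ \frac1{2i}(h_{2\bar1}-h_{1\bar2})&\frac12(h_{1\bar2}+h_{2\bar1})&0&h_{2\bar2}\end{pmatrix};$$ $\iota_{sym}$ is injective. The Ricci curvature of a Hermitian metric $h$ is taken to be $R_{\bar jk}=\partial_{\bar j}\partial_k\log\det[h]$. *)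

theory Defs
  imports "HOL-Analysis.Analysis"
begin

fun C_k_on :: "nat \<Rightarrow> ('a::real_normed_vector \<Rightarrow> 'b::real_normed_vector) \<Rightarrow> 'a set \<Rightarrow> bool" where
  "C_k_on 0 f S = continuous_on S f"
| "C_k_on (Suc k) f S =
     ((\<forall>x\<in>S. f differentiable (at x)) \<and>
      (\<forall>v. C_k_on k (\<lambda>x. frechet_derivative f (at x) v) S))"

definition smooth_on :: "'a::real_normed_vector set \<Rightarrow> ('a \<Rightarrow> 'b::real_normed_vector) \<Rightarrow> bool" where
  "smooth_on S f \<longleftrightarrow> (\<forall>k. C_k_on k f S)"

definition row4 :: "'a \<Rightarrow> 'a \<Rightarrow> 'a \<Rightarrow> 'a \<Rightarrow> 4 \<Rightarrow> 'a" where
  "row4 a b c d k = (if k = 1 then a else if k = 2 then b else if k = 3 then c else d)"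

definition mat4 :: "real list list \<Rightarrow> real^4^4" where
  "mat4 rs = (\<chi> k l. row4 (rs!0) (rs!1) (rs!2) (rs!3) k ! (if l = 1 then 0 else if l = 2 then 1 else if l = 3 then 2 else 3))"

definition E4 :: "real^4^4" where "E4 = mat 1"

definition antisym4 :: "real^4^4 \<Rightarrow> bool" where
  "antisym4 w \<longleftrightarrow> transpose w = - w"

definition levi_civita :: "4 \<Rightarrow> 4 \<Rightarrow> 4 \<Rightarrow> 4 \<Rightarrow> real" where
  "levi_civita k l m n =
     (let p = row4 k l m n in if p permutes (UNIV :: 4 set) then of_int (sign p) else 0)"

definition hodge_star :: "real^4^4 \<Rightarrow> real^4^4" where
  "hodge_star w = (\<chi> k l. (1/2) * (\<Sum>m\<in>UNIV. \<Sum>n\<in>UNIV. levi_civita k l m n * w$m$n))"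

text \<open>theta_pm s t is the matrix theta^+ for s = 1 and theta^- for s = -1.\<close>
definition theta_pm :: "real \<Rightarrow> real \<Rightarrow> real^4^4" where
  "theta_pm s t = mat4 [[0, -t, 0, 0], [t, 0, 0, 0], [0, 0, 0, -s*t], [0, 0, s*t, 0]]"

definition hermitian2 :: "complex^2^2 \<Rightarrow> bool" where
  "hermitian2 H \<longleftrightarrow> (\<forall>i j. H$i$j = cnj (H$j$i))"

definition pos_def2 :: "complex^2^2 \<Rightarrow> bool" where
  "pos_def2 H \<longleftrightarrow> (\<forall>v::complex^2. v \<noteq> 0 \<longrightarrow>
      (\<Sum>i\<in>UNIV. \<Sum>j\<in>UNIV. cnj (v$i) * H$i$j * v$j) \<in> \<real> \<and>
      Re (\<Sum>i\<in>UNIV. \<Sum>j\<in>UNIV. cnj (v$i) * H$i$j * v$j) > 0)"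

definition neg_def2 :: "complex^2^2 \<Rightarrow> bool" where
  "neg_def2 H \<longleftrightarrow> pos_def2 (- H)"

text \<open>iota_sym (defined on Hermitian matrices, where all the displayed entries are real).\<close>
definition iota_sym :: "complex^2^2 \<Rightarrow> real^4^4" where
  "iota_sym H =
    (let a = Re (H$1$1); d = Re (H$2$2);
         p = Re ((H$1$2 + H$2$1) / 2); q = Re ((H$2$1 - H$1$2) / (2 * \<i>))
     in mat4 [[a, 0, p, q], [0, a, -q, p], [p, -q, d, 0], [q, p, 0, d]])"

text \<open>Coordinates: z1 = x2 + i x1, z2 = x4 + i x3.\<close>
definition partial4 :: "4 \<Rightarrow> (real^4 \<Rightarrow> complex) \<Rightarrow> real^4 \<Rightarrow> complex" where
  "partial4 i f x = frechet_derivative f (at x) (axis i 1)"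

definition re_idx :: "2 \<Rightarrow> 4" where "re_idx j = (if j = 1 then 2 else 4)"
definition im_idx :: "2 \<Rightarrow> 4" where "im_idx j = (if j = 1 then 1 else 3)"

definition dz :: "2 \<Rightarrow> (real^4 \<Rightarrow> complex) \<Rightarrow> real^4 \<Rightarrow> complex" where
  "dz j f x = (partial4 (re_idx j) f x - \<i> * partial4 (im_idx j) f x) / 2"

definition dzbar :: "2 \<Rightarrow> (real^4 \<Rightarrow> complex) \<Rightarrow> real^4 \<Rightarrow> complex" where
  "dzbar j f x = (partial4 (re_idx j) f x + \<i> * partial4 (im_idx j) f x) / 2"

text \<open>R_{jbar k} = d_{zbar j} d_{z k} log det h  (det h is real for Hermitian h).\<close>
definition ricci :: "(real^4 \<Rightarrow> complex^2^2) \<Rightarrow> 2 \<Rightarrow> 2 \<Rightarrow> real^4 \<Rightarrow> complex" where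
  "ricci h j k x = dzbar j (dz k (\<lambda>y. complex_of_real (ln (Re (det (h y)))))) x"

end

theory Submission
  imports Defs
begin

text \<open>
  For an antisymmetric \<omega> with \<star>\<omega> = \<plusminus>\<omega>, the product X = \<omega>\<theta>^\<mp> squares to a scalar matrix,
  X^2 = t^2 (\<omega>_12^2 + \<omega>_13^2 + \<omega>_14^2) E. Hence E - X is inverted by a multiple of E + X, and
  g = 2 (E - X)^-1 - E is an explicit smooth function of \<omega>. Reading h off g, its determinant
  g_11 g_33 - g_13^2 - g_14^2 equals 1 identically. Then h_11 h_22 = 1 + |h_12|^2 > 0, so h_11 never
  vanishes; on the connected set U it keeps one sign, and that sign decides between positive
  and negative definiteness. Finally det h is constant, so the derivatives of log det h, and
  with them the Ricci form, vanish.
\<close>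

section \<open>Calculus of smooth maps\<close>

lemma C_k_on_cong:
  assumes "open U" "\<And>x. x \<in> U \<Longrightarrow> f x = g x" "C_k_on k f U"
  shows "C_k_on k g U"
  using assms
proof (induction k arbitrary: f g)
  case 0
  then show ?case using continuous_on_cong by fastforce
next
  case (Suc k)
  have df: "\<forall>x\<in>U. f differentiable (at x)" and cf: "\<And>v. C_k_on k (\<lambda>x. frechet_derivative f (at x) v) U"
    using Suc.prems by auto
  have dg: "\<forall>x\<in>U. g differentiable (at x)"
  proof
    fix x assume x: "x \<in> U"
    have "(f has_derivative frechet_derivative f (at x)) (at x)"
      using df x frechet_derivative_works by blast
    then have "(g has_derivative frechet_derivative f (at x)) (at x)"
      using has_derivative_transform_within_open[OF _ Suc.prems(1) x] Suc.prems(2) by metis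
    then show "g differentiable (at x)" unfolding differentiable_def by blast
  qed
  have "C_k_on k (\<lambda>x. frechet_derivative g (at x) v) U" for v
    by (rule Suc.IH[OF Suc.prems(1) _ cf[of v]])
       (use frechet_derivative_transform_within_open[of f _ U g] df Suc.prems(1,2) in metis)
  then show ?case using dg by simp
qed

lemma C_k_on_Suc_imp:
  assumes "open U" "C_k_on (Suc k) f U"
  shows "C_k_on k f U"
  using assms
proof (induction k arbitrary: f)
  case 0
  then show ?case
    by (auto intro!: continuous_at_imp_continuous_on differentiable_imp_continuous_within)
next
  case (Suc k)
  then show ?case by auto
qed

lemma C_k_on_const: "C_k_on k (\<lambda>x. c) U"
  by (induction k arbitrary: c) simp_all

lemma C_k_on_add:
  assumes "open U" "C_k_on k f U" "C_k_on k g U"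
  shows "C_k_on k (\<lambda>x. f x + g x) U"
  using assms
proof (induction k arbitrary: f g)
  case 0
  then show ?case by (simp add: continuous_on_add)
next
  case (Suc k)
  have df: "\<forall>x\<in>U. f differentiable (at x)" and cf: "\<And>v. C_k_on k (\<lambda>x. frechet_derivative f (at x) v) U"
    and dg: "\<forall>x\<in>U. g differentiable (at x)" and cg: "\<And>v. C_k_on k (\<lambda>x. frechet_derivative g (at x) v) U"
    using Suc.prems by auto
  have der: "((\<lambda>x. f x + g x) has_derivative
      (\<lambda>v. frechet_derivative f (at x) v + frechet_derivative g (at x) v)) (at x)" if "x \<in> U" for x
    using df dg that frechet_derivative_works has_derivative_add by blast
  have "C_k_on k (\<lambda>x. frechet_derivative (\<lambda>x. f x + g x) (at x) v) U" for v
    by (rule C_k_on_cong[OF Suc.prems(1) _ Suc.IH[OF Suc.prems(1) cf[of v] cg[of v]]])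
       (use frechet_derivative_at[OF der, symmetric] in simp)
  moreover have "\<forall>x\<in>U. (\<lambda>x. f x + g x) differentiable (at x)"
    using der differentiable_def by blast
  ultimately show ?case by simp
qed

lemma C_k_on_linear:
  assumes L: "bounded_linear L" and "open U" "C_k_on k f U"
  shows "C_k_on k (\<lambda>x. L (f x)) U"
  using assms(2,3)
proof (induction k arbitrary: f)
  case 0
  then show ?case using bounded_linear.continuous_on[OF L] by simp
next
  case (Suc k)
  have df: "\<forall>x\<in>U. f differentiable (at x)" and cf: "\<And>v. C_k_on k (\<lambda>x. frechet_derivative f (at x) v) U"
    using Suc.prems by auto
  have der: "((\<lambda>x. L (f x)) has_derivative (\<lambda>v. L (frechet_derivative f (at x) v))) (at x)"
    if "x \<in> U" for x
    using df that frechet_derivative_works bounded_linear.has_derivative[OF L] by blast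
  have "C_k_on k (\<lambda>x. frechet_derivative (\<lambda>x. L (f x)) (at x) v) U" for v
    by (rule C_k_on_cong[OF Suc.prems(1) _ Suc.IH[OF Suc.prems(1) cf[of v]]])
       (use frechet_derivative_at[OF der, symmetric] in simp)
  moreover have "\<forall>x\<in>U. (\<lambda>x. L (f x)) differentiable (at x)"
    using der differentiable_def by blast
  ultimately show ?case by simp
qed

lemma C_k_on_bilinear:
  assumes B: "bounded_bilinear B" and "open U" "C_k_on k f U" "C_k_on k g U"
  shows "C_k_on k (\<lambda>x. B (f x) (g x)) U"
  using assms(2-)
proof (induction k arbitrary: f g)
  case 0
  then show ?case using bounded_bilinear.continuous_on[OF B] by simp
next
  case (Suc k)
  have df: "\<forall>x\<in>U. f differentiable (at x)" and cf: "\<And>v. C_k_on k (\<lambda>x. frechet_derivative f (at x) v) U"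
    and dg: "\<forall>x\<in>U. g differentiable (at x)" and cg: "\<And>v. C_k_on k (\<lambda>x. frechet_derivative g (at x) v) U"
    using Suc.prems by auto
  have fk: "C_k_on k f U" and gk: "C_k_on k g U" using C_k_on_Suc_imp Suc.prems by blast+
  have der: "((\<lambda>x. B (f x) (g x)) has_derivative
      (\<lambda>v. B (f x) (frechet_derivative g (at x) v) + B (frechet_derivative f (at x) v) (g x))) (at x)"
    if "x \<in> U" for x
  proof -
    have "(f has_derivative frechet_derivative f (at x)) (at x)"
      "(g has_derivative frechet_derivative g (at x)) (at x)"
      using df dg that frechet_derivative_works by blast+
    from bounded_bilinear.FDERIV[OF B this] show ?thesis .
  qed
  have "C_k_on k (\<lambda>x. frechet_derivative (\<lambda>x. B (f x) (g x)) (at x) v) U" for v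
    by (rule C_k_on_cong[OF Suc.prems(1) _ C_k_on_add[OF Suc.prems(1)
          Suc.IH[OF Suc.prems(1) fk cg[of v]] Suc.IH[OF Suc.prems(1) cf[of v] gk]]])
       (use frechet_derivative_at[OF der, symmetric] in simp)
  moreover have "\<forall>x\<in>U. (\<lambda>x. B (f x) (g x)) differentiable (at x)"
    using der differentiable_def by blast
  ultimately show ?case by simp
qed

lemma smooth_on_cong:
  assumes "open U" "\<And>x. x \<in> U \<Longrightarrow> f x = g x" "smooth_on U f"
  shows "smooth_on U g"
  using assms C_k_on_cong unfolding smooth_on_def by blast

lemma smooth_on_imp_continuous_on: "smooth_on U f \<Longrightarrow> continuous_on U f"
  unfolding smooth_on_def using C_k_on.simps(1) by blast

lemma smooth_on_const: "smooth_on U (\<lambda>x. c)"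
  unfolding smooth_on_def using C_k_on_const by blast

lemma smooth_on_add:
  assumes "open U" "smooth_on U f" "smooth_on U g"
  shows "smooth_on U (\<lambda>x. f x + g x)"
  using C_k_on_add[OF assms(1) assms(2,3)[unfolded smooth_on_def, rule_format]] smooth_on_def by blast

lemma smooth_on_linear:
  assumes "bounded_linear L" "open U" "smooth_on U f"
  shows "smooth_on U (\<lambda>x. L (f x))"
  using C_k_on_linear[OF assms(1,2) assms(3)[unfolded smooth_on_def, rule_format]] smooth_on_def by blast

lemma smooth_on_bilinear:
  assumes "bounded_bilinear B" "open U" "smooth_on U f" "smooth_on U g"
  shows "smooth_on U (\<lambda>x. B (f x) (g x))"
  using C_k_on_bilinear[OF assms(1,2) assms(3,4)[unfolded smooth_on_def, rule_format]] smooth_on_def by blast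

lemma smooth_on_diff:
  assumes "open U" "smooth_on U f" "smooth_on U g"
  shows "smooth_on U (\<lambda>x. f x - g x)"
proof -
  have neg: "smooth_on U (\<lambda>x. - g x)"
    using smooth_on_linear[OF bounded_linear_minus[OF bounded_linear_ident] assms(1,3)] by simp
  then show ?thesis using smooth_on_add[OF assms(1,2) neg] by simp
qed

lemma smooth_on_mult:
  fixes f g :: "'a::real_normed_vector \<Rightarrow> 'b::real_normed_algebra"
  shows "open U \<Longrightarrow> smooth_on U f \<Longrightarrow> smooth_on U g \<Longrightarrow> smooth_on U (\<lambda>x. f x * g x)"
  using smooth_on_bilinear[OF bounded_bilinear_mult] .

lemma smooth_on_scaleR:
  "open U \<Longrightarrow> smooth_on U f \<Longrightarrow> smooth_on U g \<Longrightarrow> smooth_on U (\<lambda>x. f x *\<^sub>R g x)"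
  using smooth_on_bilinear[OF bounded_bilinear_scaleR] .

lemma smooth_on_inverse:
  fixes f :: "'a::real_normed_vector \<Rightarrow> real"
  assumes U: "open U" and nz: "\<forall>x\<in>U. f x \<noteq> 0" and f: "smooth_on U f"
  shows "smooth_on U (\<lambda>x. inverse (f x))"
  unfolding smooth_on_def
proof
  fix k show "C_k_on k (\<lambda>x. inverse (f x)) U"
  proof (induction k)
    case 0
    then show ?case using continuous_on_inverse[OF smooth_on_imp_continuous_on[OF f]] nz by simp
  next
    case (Suc k)
    have df: "\<forall>x\<in>U. f differentiable (at x)"
      and cf: "\<And>v. C_k_on k (\<lambda>x. frechet_derivative f (at x) v) U"
      using f[unfolded smooth_on_def, rule_format, of "Suc k"] by auto
    have der: "((\<lambda>x. inverse (f x)) has_derivative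
        (\<lambda>v. - (inverse (f x) * frechet_derivative f (at x) v * inverse (f x)))) (at x)"
      if "x \<in> U" for x
    proof -
      have "(f has_derivative frechet_derivative f (at x)) (at x)"
        using df that frechet_derivative_works by blast
      then show ?thesis using Deriv.has_derivative_inverse nz that by blast
    qed
    have "C_k_on k (\<lambda>x. frechet_derivative (\<lambda>x. inverse (f x)) (at x) v) U" for v
      by (rule C_k_on_cong[OF U _ C_k_on_linear[OF bounded_linear_minus[OF bounded_linear_ident] U
            C_k_on_bilinear[OF bounded_bilinear_mult U
              C_k_on_bilinear[OF bounded_bilinear_mult U Suc.IH cf[of v]] Suc.IH]]])
         (use frechet_derivative_at[OF der, symmetric] in simp)
    moreover have "\<forall>x\<in>U. (\<lambda>x. inverse (f x)) differentiable (at x)"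
      using der differentiable_def by blast
    ultimately show ?case by simp
  qed
qed

section \<open>Matrix algebra\<close>

lemma matrix_inv_eqI:
  fixes A B :: "'a::semiring_1^'n^'n"
  assumes "A ** B = mat 1" "B ** A = mat 1"
  shows "matrix_inv A = B"
  unfolding matrix_inv_def
proof (rule some_equality)
  show "A ** B = mat 1 \<and> B ** A = mat 1" using assms by simp
next
  fix B' assume B': "A ** B' = mat 1 \<and> B' ** A = mat 1"
  have "B' = B' ** (A ** B)" using assms(1) by simp
  also have "\<dots> = B" using B' by (simp add: matrix_mul_assoc)
  finally show "B' = B" .
qed

lemma matrix_diff_ldistrib: "(A::'a::ring_1^'n^'m) ** (B - C) = A ** B - A ** C"
  by (vector matrix_matrix_mult_def sum_subtractf[symmetric] right_diff_distrib)

lemma matrix_add_rdistrib: "((A::'a::semiring_1^'n^'m) + B) ** C = A ** C + B ** C"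
  by (vector matrix_matrix_mult_def sum.distrib[symmetric] distrib_right)

lemma matrix_diff_rdistrib: "((A::'a::ring_1^'n^'m) - B) ** C = A ** C - B ** C"
  by (vector matrix_matrix_mult_def sum_subtractf[symmetric] left_diff_distrib)

lemma one_minus_mult_one_plus:
  fixes X :: "'a::ring_1^'n^'n"
  shows "(mat 1 - X) ** (mat 1 + X) = mat 1 - X ** X"
    and "(mat 1 + X) ** (mat 1 - X) = mat 1 - X ** X"
  by (simp_all add: matrix_diff_rdistrib matrix_add_rdistrib matrix_add_ldistrib matrix_diff_ldistrib)

lemma matrix_inv_one_minus_square_scalar:
  fixes X :: "real^'n^'n"
  assumes "X ** X = c *\<^sub>R mat 1" "c \<noteq> 1"
  shows "matrix_inv (mat 1 - X) = inverse (1 - c) *\<^sub>R (mat 1 + X)"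
proof (rule matrix_inv_eqI)
  have "mat 1 - X ** X = (1 - c) *\<^sub>R (mat 1 :: real^'n^'n)"
    using assms(1) by (simp add: algebra_simps)
  then show "(mat 1 - X) ** (inverse (1 - c) *\<^sub>R (mat 1 + X)) = mat 1"
    and "(inverse (1 - c) *\<^sub>R (mat 1 + X)) ** (mat 1 - X) = mat 1"
    using assms(2) by (simp_all add: one_minus_mult_one_plus matrix_scalar_ac scalar_matrix_assoc[symmetric])
qed

lemma invertible_one_minus_involution:
  fixes X :: "'a::comm_ring_1^'n^'n"
  assumes "invertible (mat 1 - X)" "X ** X = mat 1"
  shows "X = - mat 1"
proof -
  obtain A where A: "A ** (mat 1 - X) = mat 1" using assms(1) unfolding invertible_def by blast
  have "mat 1 + X = A ** ((mat 1 - X) ** (mat 1 + X))" using A by (simp add: matrix_mul_assoc)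
  also have "\<dots> = 0" using assms(2) by (simp add: one_minus_mult_one_plus)
  finally show ?thesis by (simp add: add_eq_0_iff)
qed

lemma bounded_linear_matrix_entry: "bounded_linear (\<lambda>M::'a::real_normed_vector^'n^'m. M$i$j)"
  using bounded_linear_compose[OF bounded_linear_vec_nth[of j] bounded_linear_vec_nth[of i]] by simp

lemma bounded_linear_matrix_mult_right: "bounded_linear (\<lambda>A::real^'n^'m. A ** B)"
  unfolding linear_conv_bounded_linear[symmetric]
  by (rule linearI)
     (simp_all add: matrix_matrix_mult_def vec_eq_iff sum.distrib distrib_right scaleR_sum_right
        sum_distrib_left mult.assoc)

section \<open>Self-dual antisymmetric matrices\<close>

lemma sum_UNIV_4: "sum f (UNIV::4 set) = f 1 + f 2 + f 3 + f 4"
  unfolding UNIV_4 by (simp add: ac_simps)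

lemma row4_simps [simp]:
  "row4 a b c d 1 = a" "row4 a b c d 2 = b" "row4 a b c d 3 = c" "row4 a b c d 4 = d"
  "row4 a b c d 0 = d" \<comment> \<open>in the numeral type 4, the simplifier normalises 4 to 0\<close>
  by (simp_all add: row4_def)

lemma fun_eq_4I: "(\<And>x::4. x = 1 \<or> x = 2 \<or> x = 3 \<or> x = 4 \<Longrightarrow> f x = g x) \<Longrightarrow> f = g"
  using exhaust_4 by blast

lemma row4_not_permutes:
  assumes "k = l \<or> k = m \<or> k = n \<or> l = m \<or> l = n \<or> m = n"
  shows "\<not> row4 k l m n permutes (UNIV::4 set)"
proof
  assume "row4 k l m n permutes UNIV"
  then have "inj (row4 k l m n)" by (simp add: permutes_inj)
  then have "\<And>a b. row4 k l m n a = row4 k l m n b \<Longrightarrow> a = b" by (simp add: inj_eq)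
  from this[of 1 2] this[of 1 3] this[of 1 4] this[of 2 3] this[of 2 4] this[of 3 4] assms
  show False by auto
qed

lemma row4_permutations:
  "row4 (1::4) 2 3 4 = id"
  "row4 (1::4) 2 4 3 = Transposition.transpose 3 4"
  "row4 (1::4) 3 2 4 = Transposition.transpose 2 3"
  "row4 (1::4) 4 3 2 = Transposition.transpose 2 4"
  "row4 (1::4) 3 4 2 = Transposition.transpose 2 3 \<circ> Transposition.transpose 3 4"
  "row4 (1::4) 4 2 3 = Transposition.transpose 2 4 \<circ> Transposition.transpose 3 4"
  by (rule fun_eq_4I; auto simp: Transposition.transpose_def)+

lemmas levi_civita_simps = levi_civita_def Let_def row4_permutations permutes_swap_id
  permutes_compose sign_swap_id sign_compose permutation_swap_id

lemma levi_civita_12: "levi_civita 1 2 m n = (if m = 3 \<and> n = 4 then 1 else if m = 4 \<and> n = 3 then -1 else 0)"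
proof -
  consider "m = 3 \<and> n = 4" | "m = 4 \<and> n = 3" | "1 = m \<or> 1 = n \<or> 2 = m \<or> 2 = n \<or> m = n"
    using exhaust_4[of m] exhaust_4[of n] by auto
  then show ?thesis
  proof cases
    case 3
    then show ?thesis using row4_not_permutes[of 1 2 m n] by (auto simp: levi_civita_def)
  qed (simp_all add: levi_civita_simps)
qed

lemma levi_civita_13: "levi_civita 1 3 m n = (if m = 2 \<and> n = 4 then -1 else if m = 4 \<and> n = 2 then 1 else 0)"
proof -
  consider "m = 2 \<and> n = 4" | "m = 4 \<and> n = 2" | "1 = m \<or> 1 = n \<or> 3 = m \<or> 3 = n \<or> m = n"
    using exhaust_4[of m] exhaust_4[of n] by auto
  then show ?thesis
  proof cases
    case 3
    then show ?thesis using row4_not_permutes[of 1 3 m n] by (auto simp: levi_civita_def)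
  qed (simp_all add: levi_civita_simps)
qed

lemma levi_civita_14: "levi_civita 1 4 m n = (if m = 2 \<and> n = 3 then 1 else if m = 3 \<and> n = 2 then -1 else 0)"
proof -
  consider "m = 2 \<and> n = 3" | "m = 3 \<and> n = 2" | "1 = m \<or> 1 = n \<or> 4 = m \<or> 4 = n \<or> m = n"
    using exhaust_4[of m] exhaust_4[of n] by auto
  then show ?thesis
  proof cases
    case 3
    then show ?thesis using row4_not_permutes[of 1 4 m n] by (auto simp: levi_civita_def)
  qed (simp_all add: levi_civita_simps)
qed

lemma hodge_star_first_row:
  "hodge_star W $1$2 = (W$3$4 - W$4$3) / 2"
  "hodge_star W $1$3 = (W$4$2 - W$2$4) / 2"
  "hodge_star W $1$4 = (W$2$3 - W$3$2) / 2"
  by (simp_all add: hodge_star_def levi_civita_12 levi_civita_13 levi_civita_14 sum_UNIV_4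
      if_distrib cong: if_cong)

lemma mat4_expand:
  "mat4 [[a11,a12,a13,a14],[a21,a22,a23,a24],[a31,a32,a33,a34],[a41,a42,a43,a44]]
   = (\<chi> i j. row4 (row4 a11 a12 a13 a14 j) (row4 a21 a22 a23 a24 j)
                   (row4 a31 a32 a33 a34 j) (row4 a41 a42 a43 a44 j) i)"
  unfolding mat4_def vec_eq_iff forall_4 by (simp add: row4_def)

lemma mat_4_eqI:
  "(\<And>i j. i = 1 \<or> i = 2 \<or> i = 3 \<or> i = 4 \<Longrightarrow> j = 1 \<or> j = 2 \<or> j = 3 \<or> j = 4 \<Longrightarrow> (A::'a^4^4)$i$j = B$i$j)
   \<Longrightarrow> A = B"
  unfolding vec_eq_iff using exhaust_4 by blast

definition self_dual4 :: "real \<Rightarrow> real \<Rightarrow> real \<Rightarrow> real \<Rightarrow> real^4^4" where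
  "self_dual4 s a b c =
     mat4 [[0, a, b, c], [- a, 0, s * c, - s * b], [- b, - s * c, 0, s * a], [- c, s * b, - s * a, 0]]"

lemma antisym4_hodge_eigen_eq_self_dual4:
  assumes anti: "antisym4 W" and eigen: "hodge_star W = s *\<^sub>R W"
  shows "W = self_dual4 s (W$1$2) (W$1$3) (W$1$4)"
proof -
  have e: "W$i$j = - W$j$i" for i j
  proof -
    have "Finite_Cartesian_Product.transpose W $j$i = (- W)$j$i" using anti unfolding antisym4_def by simp
    then show ?thesis by (simp add: Finite_Cartesian_Product.transpose_def)
  qed
  have d: "W$i$i = 0" for i using e[of i i] by linarith
  have "hodge_star W $1$2 = s * W$1$2" "hodge_star W $1$3 = s * W$1$3" "hodge_star W $1$4 = s * W$1$4"
    using eigen by simp_all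
  then have h: "W$3$4 = s * W$1$2" "W$2$4 = - s * W$1$3" "W$2$3 = s * W$1$4"
    unfolding hodge_star_first_row using e[of 4 3] e[of 4 2] e[of 3 2] by auto
  show ?thesis
    unfolding self_dual4_def mat4_expand
    by (rule mat_4_eqI)
       (use d e[of 2 1] e[of 3 1] e[of 4 1] e[of 4 3] e[of 4 2] e[of 3 2] h in \<open>elim disjE; simp\<close>)
qed

definition omega_theta :: "real \<Rightarrow> real \<Rightarrow> real \<Rightarrow> real \<Rightarrow> real \<Rightarrow> real^4^4" where
  "omega_theta s a b c t = mat4 [[a*t, 0, -s*t*c, s*t*b], [0, a*t, t*b, t*c],
                                [-s*c*t, b*t, -t*a, 0], [s*b*t, c*t, 0, -t*a]]"

lemma self_dual4_mult_theta_pm: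
  assumes "s = 1 \<or> s = -1"
  shows "self_dual4 s a b c ** theta_pm (-s) t = omega_theta s a b c t"
  unfolding self_dual4_def omega_theta_def theta_pm_def mat4_expand matrix_matrix_mult_def
  by (rule mat_4_eqI) (use assms in \<open>elim disjE; auto simp: sum_UNIV_4\<close>)

lemma omega_theta_square:
  assumes "s = 1 \<or> s = -1"
  shows "omega_theta s a b c t ** omega_theta s a b c t = (t\<^sup>2 * (a\<^sup>2 + b\<^sup>2 + c\<^sup>2)) *\<^sub>R mat 1"
  unfolding omega_theta_def mat4_expand matrix_matrix_mult_def
  by (rule mat_4_eqI) (use assms in \<open>elim disjE; auto simp: sum_UNIV_4 mat_def algebra_simps power2_eq_square\<close>)

definition self_dual_norm2 :: "real^4^4 \<Rightarrow> real" where
  "self_dual_norm2 W = (W$1$2)\<^sup>2 + (W$1$3)\<^sup>2 + (W$1$4)\<^sup>2"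

lemma self_dual_mult_theta_pm:
  fixes s t :: real and W :: "real^4^4"
  assumes "s = 1 \<or> s = -1" "antisym4 W" "hodge_star W = s *\<^sub>R W"
  defines "X \<equiv> W ** theta_pm (-s) t"
  shows "X ** X = (t\<^sup>2 * self_dual_norm2 W) *\<^sub>R mat 1"
    and "X$1$1 = t * W$1$2" "X$3$3 = - t * W$1$2" "X$1$3 = - s * t * W$1$4" "X$1$4 = s * t * W$1$3"
proof -
  have X: "X = omega_theta s (W$1$2) (W$1$3) (W$1$4) t"
    unfolding X_def using antisym4_hodge_eigen_eq_self_dual4[OF assms(2,3)] self_dual4_mult_theta_pm[OF assms(1)]
    by metis
  show "X ** X = (t\<^sup>2 * self_dual_norm2 W) *\<^sub>R mat 1"
    unfolding X omega_theta_square[OF assms(1)] self_dual_norm2_def ..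
  show "X$1$1 = t * W$1$2" "X$3$3 = - t * W$1$2" "X$1$3 = - s * t * W$1$4" "X$1$4 = s * t * W$1$3"
    unfolding X omega_theta_def mat4_expand by (simp_all add: mult.commute)
qed

lemma self_dual_cayley_inverse:
  fixes s t :: real and W :: "real^4^4"
  assumes s: "s = 1 \<or> s = -1" and anti: "antisym4 W" and eigen: "hodge_star W = s *\<^sub>R W"
    and det: "det (E4 - W ** theta_pm (-s) t) \<noteq> 0"
  shows "t\<^sup>2 * self_dual_norm2 W \<noteq> 1"
    and "matrix_inv (E4 - W ** theta_pm (-s) t)
           = inverse (1 - t\<^sup>2 * self_dual_norm2 W) *\<^sub>R (E4 + W ** theta_pm (-s) t)"
proof -
  define X where "X = W ** theta_pm (-s) t"
  note X = self_dual_mult_theta_pm[OF s anti eigen, of t, folded X_def]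
  show c: "t\<^sup>2 * self_dual_norm2 W \<noteq> 1"
  proof
    assume "t\<^sup>2 * self_dual_norm2 W = 1"
    moreover have "invertible (mat 1 - X)"
      using det invertible_det_nz unfolding X_def E4_def by blast
    ultimately have "X = - mat 1" using X(1) invertible_one_minus_involution by force
    then have "X$1$1 + X$3$3 = -2" by (simp add: mat_def)
    then show False using X(2,3) by simp
  qed
  show "matrix_inv (E4 - X) = inverse (1 - t\<^sup>2 * self_dual_norm2 W) *\<^sub>R (E4 + X)"
    unfolding E4_def by (rule matrix_inv_one_minus_square_scalar[OF X(1) c])
qed

lemma self_dual_cayley_det:
  fixes s t :: real and W :: "real^4^4"
  assumes s: "s = 1 \<or> s = -1" and anti: "antisym4 W" and eigen: "hodge_star W = s *\<^sub>R W"
    and det: "det (E4 - W ** theta_pm (-s) t) \<noteq> 0"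
  defines "G \<equiv> 2 *\<^sub>R matrix_inv (E4 - W ** theta_pm (-s) t) - E4"
  shows "G$1$1 * G$3$3 - (G$1$3)\<^sup>2 - (G$1$4)\<^sup>2 = 1"
proof -
  define X where "X = W ** theta_pm (-s) t"
  define D where "D = 1 - t\<^sup>2 * self_dual_norm2 W"
  have D: "D \<noteq> 0" using self_dual_cayley_inverse(1)[OF assms(1-4)] unfolding D_def by simp
  note X = self_dual_mult_theta_pm[OF s anti eigen, of t, folded X_def]
  have G: "G = (2 / D) *\<^sub>R (E4 + X) - E4"
    using self_dual_cayley_inverse(2)[OF assms(1-4)] unfolding G_def D_def X_def by (simp add: divide_inverse)
  have "G$1$1 = (2 * (1 + t * W$1$2) - D) / D" "G$3$3 = (2 * (1 - t * W$1$2) - D) / D"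
    "G$1$3 = - 2 * s * t * W$1$4 / D" "G$1$4 = 2 * s * t * W$1$3 / D"
    unfolding G using X(2-5) D by (simp_all add: E4_def mat_def field_simps)
  moreover have "\<And>a b c d :: real. (a / D) * (b / D) - (c / D)\<^sup>2 - (d / D)\<^sup>2 = (a * b - c\<^sup>2 - d\<^sup>2) / D\<^sup>2"
    using D by (simp add: field_simps power2_eq_square)
  moreover have "(2 * (1 + t * W$1$2) - D) * (2 * (1 - t * W$1$2) - D)
      - (- 2 * s * t * W$1$4)\<^sup>2 - (2 * s * t * W$1$3)\<^sup>2 = D\<^sup>2"
    using s unfolding D_def self_dual_norm2_def by (auto simp: algebra_simps power2_eq_square)
  ultimately show ?thesis using D by simp
qed

lemma smooth_on_self_dual_cayley:
  fixes w :: "'a::real_normed_vector \<Rightarrow> real^4^4"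
  assumes s: "s = 1 \<or> s = -1" and U: "open U" and w: "smooth_on U w"
    and anti: "\<forall>x\<in>U. antisym4 (w x)" and eigen: "\<forall>x\<in>U. hodge_star (w x) = s *\<^sub>R w x"
    and det: "\<forall>x\<in>U. det (E4 - w x ** theta_pm (-s) t) \<noteq> 0"
  shows "smooth_on U (\<lambda>x. 2 *\<^sub>R matrix_inv (E4 - w x ** theta_pm (-s) t) - E4)"
proof -
  note cayley = self_dual_cayley_inverse[OF s anti[rule_format] eigen[rule_format] det[rule_format]]
  have entry: "smooth_on U (\<lambda>x. w x $i$j)" for i j
    using smooth_on_linear[OF bounded_linear_matrix_entry U w] .
  have "smooth_on U (\<lambda>x. 1 - t\<^sup>2 * self_dual_norm2 (w x))"
    unfolding self_dual_norm2_def power2_eq_square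
    by (intro smooth_on_diff smooth_on_add smooth_on_mult smooth_on_const entry U)
  then have "smooth_on U (\<lambda>x. 2 * inverse (1 - t\<^sup>2 * self_dual_norm2 (w x)))"
    using smooth_on_inverse[OF U] cayley(1) by (intro smooth_on_mult smooth_on_const U) auto
  moreover have "smooth_on U (\<lambda>x. E4 + w x ** theta_pm (-s) t)"
    by (intro smooth_on_add smooth_on_const smooth_on_linear[OF bounded_linear_matrix_mult_right U w] U)
  ultimately have explicit: "smooth_on U (\<lambda>x. (2 * inverse (1 - t\<^sup>2 * self_dual_norm2 (w x)))
      *\<^sub>R (E4 + w x ** theta_pm (-s) t) - E4)"
    by (intro smooth_on_diff smooth_on_scaleR smooth_on_const U)
  show ?thesis by (rule smooth_on_cong[OF U _ explicit]) (simp add: cayley(2))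
qed

section \<open>The Hermitian matrix encoded by iota_sym\<close>

text \<open>
  A left inverse of iota_sym on Hermitian matrices that, unlike the THE-description in the
  theorem, is an explicit linear map on all of real^4^4.
\<close>

definition hermitian_of :: "real^4^4 \<Rightarrow> complex^2^2" where
  "hermitian_of M = (\<chi> i j.
     if i = 1 then (if j = 1 then complex_of_real (M$1$1) else Complex (M$1$3) (- M$1$4))
     else (if j = 1 then Complex (M$1$3) (M$1$4) else complex_of_real (M$3$3)))"

lemma hermitian_of_entries [simp]:
  "hermitian_of M $1$1 = complex_of_real (M$1$1)" "hermitian_of M $1$2 = Complex (M$1$3) (- M$1$4)"
  "hermitian_of M $2$1 = Complex (M$1$3) (M$1$4)" "hermitian_of M $2$2 = complex_of_real (M$3$3)"
  by (simp_all add: hermitian_of_def)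

lemma bounded_linear_hermitian_of: "bounded_linear hermitian_of"
  unfolding linear_conv_bounded_linear[symmetric]
  by (rule linearI) (simp_all add: hermitian_of_def vec_eq_iff complex_eq_iff)

lemma mat_2_eqI: "(\<And>i j. i = 1 \<or> i = 2 \<Longrightarrow> j = 1 \<or> j = 2 \<Longrightarrow> (A::'a^2^2)$i$j = B$i$j) \<Longrightarrow> A = B"
  unfolding vec_eq_iff using exhaust_2 by blast

lemma hermitian2_hermitian_of: "hermitian2 (hermitian_of M)"
  unfolding hermitian2_def
proof (intro allI)
  fix i j :: 2
  show "hermitian_of M $i$j = cnj (hermitian_of M $j$i)"
    using exhaust_2[of i] exhaust_2[of j] by (auto simp: complex_eq_iff)
qed

lemma hermitian_of_iota_sym:
  assumes "hermitian2 H"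
  shows "hermitian_of (iota_sym H) = H"
proof -
  have h: "H$1$1 = cnj (H$1$1)" "H$2$2 = cnj (H$2$2)" "H$2$1 = cnj (H$1$2)"
    using assms unfolding hermitian2_def by blast+
  then have "Im (H$1$1) = 0" "Im (H$2$2) = 0" by (metis cnj.sel(2) neg_equal_zero)+
  with h(3) show ?thesis
    by (intro mat_2_eqI) (auto simp: iota_sym_def Let_def mat4_expand complex_eq_iff)
qed

lemma the_iota_sym_preimage:
  assumes "M \<in> iota_sym ` {H. hermitian2 H}"
  shows "(THE H. hermitian2 H \<and> iota_sym H = M) = hermitian_of M"
proof (rule the_equality)
  obtain H where H: "hermitian2 H" "iota_sym H = M" using assms by blast
  then show "hermitian2 (hermitian_of M) \<and> iota_sym (hermitian_of M) = M"
    using hermitian_of_iota_sym by metis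
next
  fix H assume "hermitian2 H \<and> iota_sym H = M"
  then show "H = hermitian_of M" using hermitian_of_iota_sym by metis
qed

lemma det_hermitian_of:
  "det (hermitian_of M) = complex_of_real (M$1$1 * M$3$3 - (M$1$3)\<^sup>2 - (M$1$4)\<^sup>2)"
  by (simp add: det_2 complex_eq_iff power2_eq_square)

lemma hermitian_form_2_pos:
  fixes A D p q x1 y1 x2 y2 :: real
  assumes A: "A > 0" and det: "A * D - (p\<^sup>2 + q\<^sup>2) > 0"
    and nz: "\<not> (x1 = 0 \<and> y1 = 0 \<and> x2 = 0 \<and> y2 = 0)"
  shows "A * (x1\<^sup>2 + y1\<^sup>2) + D * (x2\<^sup>2 + y2\<^sup>2) + 2 * (x1 * (p * x2 - q * y2) + y1 * (p * y2 + q * x2)) > 0"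
    (is "?R > 0")
proof -
  define S where "S = (A * x1 + (p * x2 - q * y2))\<^sup>2 + (A * y1 + (p * y2 + q * x2))\<^sup>2
                     + (A * D - (p\<^sup>2 + q\<^sup>2)) * (x2\<^sup>2 + y2\<^sup>2)"
  \<comment> \<open>completing the square in the first variable\<close>
  have "A * ?R = S" unfolding S_def by (simp add: algebra_simps power2_eq_square)
  moreover have "S > 0"
  proof (cases "x2 = 0 \<and> y2 = 0")
    case True
    then have "(A * x1)\<^sup>2 + (A * y1)\<^sup>2 > 0" using nz A by (auto simp: sum_power2_gt_zero_iff)
    then show ?thesis using True unfolding S_def by simp
  next
    case False
    then have "x2\<^sup>2 + y2\<^sup>2 > 0" by (auto simp: sum_power2_gt_zero_iff)
    then show ?thesis using det unfolding S_def by (simp add: add_nonneg_pos)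
  qed
  ultimately have "A * ?R > 0" by simp
  then show ?thesis using A zero_less_mult_pos by blast
qed

lemma pos_def2_hermitian_of:
  assumes A: "M$1$1 > 0" and det: "M$1$1 * M$3$3 - (M$1$3)\<^sup>2 - (M$1$4)\<^sup>2 > 0"
  shows "pos_def2 (hermitian_of M)"
  unfolding pos_def2_def
proof (intro allI impI)
  fix v :: "complex^2" assume v: "v \<noteq> 0"
  obtain x1 y1 x2 y2 where v1: "v$1 = Complex x1 y1" and v2: "v$2 = Complex x2 y2"
    by (meson complex.exhaust_sel)
  have nz: "\<not> (x1 = 0 \<and> y1 = 0 \<and> x2 = 0 \<and> y2 = 0)"
  proof
    assume "x1 = 0 \<and> y1 = 0 \<and> x2 = 0 \<and> y2 = 0"
    then have "v = 0" using v1 v2 exhaust_2 by (metis Complex_eq_0 vec_eq_iff zero_index)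
    then show False using v by simp
  qed
  have "(\<Sum>i\<in>UNIV. \<Sum>j\<in>UNIV. cnj (v$i) * hermitian_of M $i$j * v$j) = complex_of_real
      (M$1$1 * (x1\<^sup>2 + y1\<^sup>2) + M$3$3 * (x2\<^sup>2 + y2\<^sup>2)
       + 2 * (x1 * (M$1$3 * x2 - (- M$1$4) * y2) + y1 * (M$1$3 * y2 + (- M$1$4) * x2)))"
    by (simp add: sum_2 v1 v2 complex_eq_iff algebra_simps power2_eq_square)
  moreover have "M$1$1 * (x1\<^sup>2 + y1\<^sup>2) + M$3$3 * (x2\<^sup>2 + y2\<^sup>2)
       + 2 * (x1 * (M$1$3 * x2 - (- M$1$4) * y2) + y1 * (M$1$3 * y2 + (- M$1$4) * x2)) > 0"
    by (rule hermitian_form_2_pos[OF A _ nz]) (use det in simp)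
  ultimately show "(\<Sum>i\<in>UNIV. \<Sum>j\<in>UNIV. cnj (v$i) * hermitian_of M $i$j * v$j) \<in> \<real> \<and>
      Re (\<Sum>i\<in>UNIV. \<Sum>j\<in>UNIV. cnj (v$i) * hermitian_of M $i$j * v$j) > 0"
    by (simp only: Reals_of_real Re_complex_of_real)
qed

lemma neg_def2_hermitian_of:
  assumes "M$1$1 < 0" and "M$1$1 * M$3$3 - (M$1$3)\<^sup>2 - (M$1$4)\<^sup>2 > 0"
  shows "neg_def2 (hermitian_of M)"
proof -
  have "pos_def2 (hermitian_of (- M))" using assms by (intro pos_def2_hermitian_of) simp_all
  then show ?thesis
    unfolding neg_def2_def using linear_neg[OF bounded_linear.linear[OF bounded_linear_hermitian_of]] by simp
qed

section \<open>Sign, determinant and Ricci curvature\<close>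

lemma connected_nonzero_sign:
  fixes f :: "'a::topological_space \<Rightarrow> real"
  assumes "connected U" "continuous_on U f" "\<forall>x\<in>U. f x \<noteq> 0"
  shows "(\<forall>x\<in>U. f x > 0) \<or> (\<forall>x\<in>U. f x < 0)"
proof (rule ccontr)
  assume "\<not> ?thesis"
  then obtain x y where xy: "x \<in> U" "y \<in> U" "f x \<le> 0" "f y \<ge> 0" by (meson not_le)
  have "connected (f ` U)" using assms connected_continuous_image by blast
  then obtain z where "z \<in> f ` U" "inner (1::real) z = 0"
    using connected_ivt_hyperplane[of "f ` U" "f x" "f y" 1 0] xy by auto
  then show False using assms(3) by auto
qed

lemma frechet_derivative_eq_0_if_constant_on:
  assumes "open U" "\<forall>y\<in>U. f y = c" "x \<in> U"
  shows "frechet_derivative f (at x) = (\<lambda>v. 0)"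
proof -
  have "((\<lambda>_. c) has_derivative (\<lambda>v. 0)) (at x)" by simp
  then have "(f has_derivative (\<lambda>v. 0)) (at x)"
    by (rule has_derivative_transform_within_open[OF _ assms(1,3)]) (use assms(2) in simp)
  then show ?thesis using frechet_derivative_at by metis
qed

lemma ricci_eq_0_if_det_constant_on:
  assumes U: "open U" and det: "\<forall>y\<in>U. det (h y) = c" and x: "x \<in> U"
  shows "ricci h j k x = 0"
proof -
  let ?F = "\<lambda>y. complex_of_real (ln (Re (det (h y))))"
  have "frechet_derivative ?F (at y) = (\<lambda>v. 0)" if "y \<in> U" for y
    by (rule frechet_derivative_eq_0_if_constant_on[OF U _ that, of _ "complex_of_real (ln (Re c))"])
       (use det in simp)
  then have "\<forall>y\<in>U. dz k ?F y = 0" by (simp add: dz_def partial4_def)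
  then have "frechet_derivative (dz k ?F) (at x) = (\<lambda>v. 0)"
    by (rule frechet_derivative_eq_0_if_constant_on[OF U _ x])
  then show ?thesis by (simp add: ricci_def dzbar_def partial4_def)
qed

theorem theorem3p1:
  fixes s t :: real
    and U :: "(real^4) set"
    and w :: "real^4 \<Rightarrow> real^4^4"
    and g :: "real^4 \<Rightarrow> real^4^4"
    and h :: "real^4 \<Rightarrow> complex^2^2"
  assumes s: "s = 1 \<or> s = -1"
    and U: "open U" "connected U"
    and w_smooth: "smooth_on U w"
    and w_antisym: "\<forall>x\<in>U. antisym4 (w x)"
    and w_dual: "\<forall>x\<in>U. hodge_star (w x) = s *\<^sub>R w x"
    and det_nz: "\<forall>x\<in>U. det (E4 - w x ** theta_pm (-s) t) \<noteq> 0"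
    and g_def: "\<forall>x\<in>U. g x = 2 *\<^sub>R matrix_inv (E4 - w x ** theta_pm (-s) t) - E4"
    and g_img: "\<forall>x\<in>U. g x \<in> iota_sym ` {H. hermitian2 H}"
    and h_def: "\<forall>x\<in>U. h x = (THE H. hermitian2 H \<and> iota_sym H = g x)"
  shows "smooth_on U h
    \<and> (\<forall>x\<in>U. hermitian2 (h x))
    \<and> ((\<forall>x\<in>U. pos_def2 (h x)) \<or> (\<forall>x\<in>U. neg_def2 (h x)))
    \<and> (\<forall>x\<in>U. det (h x) = 1)
    \<and> (\<forall>x\<in>U. \<forall>j k. ricci h j k x = 0)"
proof -
  have h_eq: "h x = hermitian_of (g x)" if "x \<in> U" for x
    using h_def g_img the_iota_sym_preimage that by simp
  have det_g: "g x$1$1 * g x$3$3 - (g x$1$3)\<^sup>2 - (g x$1$4)\<^sup>2 = 1" if "x \<in> U" for x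
    using self_dual_cayley_det[OF s w_antisym[rule_format, OF that] w_dual[rule_format, OF that]
        det_nz[rule_format, OF that]] g_def that by simp
  have "smooth_on U g"
    using smooth_on_cong[OF U(1) _ smooth_on_self_dual_cayley[OF s U(1) w_smooth w_antisym w_dual det_nz]]
      g_def by simp
  then have smooth_h: "smooth_on U h" and g11_cont: "continuous_on U (\<lambda>x. g x$1$1)"
    using smooth_on_cong[OF U(1) _ smooth_on_linear[OF bounded_linear_hermitian_of U(1)]] h_eq
      smooth_on_imp_continuous_on[OF smooth_on_linear[OF bounded_linear_matrix_entry U(1)]] by auto
  have "g x$1$1 * g x$3$3 > 0" if "x \<in> U" for x
    using det_g[OF that] by (smt (verit) zero_le_power2)
  then have "(\<forall>x\<in>U. g x$1$1 > 0) \<or> (\<forall>x\<in>U. g x$1$1 < 0)"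
    using connected_nonzero_sign[OF U(2) g11_cont] by fastforce
  moreover have "pos_def2 (h x)" if "x \<in> U" "g x$1$1 > 0" for x
    using pos_def2_hermitian_of[of "g x"] det_g[OF that(1)] h_eq[OF that(1)] that(2) by simp
  moreover have "neg_def2 (h x)" if "x \<in> U" "g x$1$1 < 0" for x
    using neg_def2_hermitian_of[of "g x"] det_g[OF that(1)] h_eq[OF that(1)] that(2) by simp
  ultimately have definite: "(\<forall>x\<in>U. pos_def2 (h x)) \<or> (\<forall>x\<in>U. neg_def2 (h x))" by blast
  have det_h: "\<forall>x\<in>U. det (h x) = 1" by (metis det_g h_eq det_hermitian_of of_real_1)
  show ?thesis
    using smooth_h definite det_h hermitian2_hermitian_of h_eq ricci_eq_0_if_det_constant_on[OF U(1) det_h]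
    by simp
qed

end
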